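(* Let $G_1$ and $G_2$ be two disjoint $(k+1)$-critical hypergraphs with $k\ge2$, let $\tilde e\in E(G_1)$ and $\tilde v\in V(G_2)$ be arbitrary, and let $s$ be an admissible map for $(\tilde e,G_2,\tilde v)$. Let $G=S(G_1,\tilde e,G_2,\tilde v,s)$ and $G_2'=G[(V(G_2)\setminus\{\tilde v\})\cup\tilde e]$. Assume that for every $k$-coloring $\varphi$ of $G[\tilde e]$ with $|\varphi(\tilde e)|\ge2$ there is a $k$-coloring $\varphi'$ of $G_2'$ whose restriction to $\tilde e$ equals $\varphi$. Then $G$ is $(k+1)$-critical.
   Context: A hypergraph is a pair $G=(V,E)$ of finite sets with $E\subseteq 2^V$ and $|e|\ge2$ for all $e\in E$. A $k$-coloring is a map $V\to\{1,\dots,k\}$ such that every edge contains two vertices of different colors; $\chi$ is the chromatic number. $G$ is $(k+1)$-critical if $\chi(G)=k+1$ but $\chi(H)\le k$ for every proper subhypergraph $H$. $G[X]$ has vertex set $X$ and the edges of $G$ contained in $X$. $\partial_G(v)$ is the set of edges containing $v$. Splitting: let $G_1,G_2$ be disjoint hypergraphs, $\tilde e\in E(G_1)$, $\tilde v\in V(G_2)$, and $s:\partial_{G_2}(\tilde v)\to 2^{\tilde e}$ a map (called admissible) with $s(e)\ne\varnothing$ for all $e$ and $\bigcup_{e}s(e)=\tilde e$. Then $S(G_1,\tilde e,G_2,\tilde v,s)$ is the hypergraph with vertex set $V(G_1)\cup(V(G_2)\setminus\{\tilde v\})$ and edge set $(E(G_1)\setminus\{\tilde e\})\cup(E(G_2)\setminus\partial_{G_2}(\tilde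 v))\cup\{(e\setminus\{\tilde v\})\cup s(e): e\in\partial_{G_2}(\tilde v)\}$. *)

theory Defs
  imports Main
begin

type_synonym 'a hypergraph = "'a set \<times> 'a set set"

definition verts :: "'a hypergraph \<Rightarrow> 'a set" where "verts G = fst G"
definition edges :: "'a hypergraph \<Rightarrow> 'a set set" where "edges G = snd G"

definition hypergraph :: "'a hypergraph \<Rightarrow> bool" where
  "hypergraph G \<longleftrightarrow> finite (verts G) \<and> edges G \<subseteq> Pow (verts G)
     \<and> (\<forall>e\<in>edges G. 2 \<le> card e)"

definition is_coloring :: "'a hypergraph \<Rightarrow> nat \<Rightarrow> ('a \<Rightarrow> nat) \<Rightarrow> bool" where
  "is_coloring G k f \<longleftrightarrow> f ` verts G \<subseteq> {1..k}
     \<and> (\<forall>e\<in>edges G. \<exists>x\<in>e. \<exists>y\<in>e. f x \<noteq> f y)"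

definition chi :: "'a hypergraph \<Rightarrow> nat" where
  "chi G = (LEAST k. \<exists>f. is_coloring G k f)"

definition subhypergraph :: "'a hypergraph \<Rightarrow> 'a hypergraph \<Rightarrow> bool" where
  "subhypergraph H G \<longleftrightarrow> hypergraph H \<and> verts H \<subseteq> verts G \<and> edges H \<subseteq> edges G"

definition critical :: "nat \<Rightarrow> 'a hypergraph \<Rightarrow> bool" where
  "critical k G \<longleftrightarrow> hypergraph G \<and> chi G = k + 1
     \<and> (\<forall>H. subhypergraph H G \<and> H \<noteq> G \<longrightarrow> chi H \<le> k)"

definition induced :: "'a hypergraph \<Rightarrow> 'a set \<Rightarrow> 'a hypergraph" where
  "induced G X = (X, {e\<in>edges G. e \<subseteq> X})"

definition incident :: "'a hypergraph \<Rightarrow> 'a \<Rightarrow> 'a set set" where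
  "incident G v = {e\<in>edges G. v \<in> e}"

definition admissible :: "'a set \<Rightarrow> 'a hypergraph \<Rightarrow> 'a \<Rightarrow> ('a set \<Rightarrow> 'a set) \<Rightarrow> bool" where
  "admissible et G2 vt s \<longleftrightarrow>
     (\<forall>e\<in>incident G2 vt. s e \<noteq> {} \<and> s e \<subseteq> et)
     \<and> (\<Union>e\<in>incident G2 vt. s e) = et"

definition split_hg :: "'a hypergraph \<Rightarrow> 'a set \<Rightarrow> 'a hypergraph \<Rightarrow> 'a \<Rightarrow> ('a set \<Rightarrow> 'a set)
    \<Rightarrow> 'a hypergraph" where
  "split_hg G1 et G2 vt s =
     (verts G1 \<union> (verts G2 - {vt}),
      (edges G1 - {et}) \<union> (edges G2 - incident G2 vt)
        \<union> {(e - {vt}) \<union> s e | e. e \<in> incident G2 vt})"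

end

theory Submission
  imports Defs "HOL-Combinatorics.Transposition"
begin

text \<open>A hypergraph is (k+1)-critical as soon as it has no k-colouring, no isolated vertex,
  and becomes k-colourable after deleting any edge. For the splitting G, a k-colouring of G would
  either be non-constant on et, and so colour G1, or constant on et, and then giving vt that colour
  colours G2. After deleting the image of an edge f of G2, a colouring of G2 - f glues with a
  colouring of G1 - et; the latter is constant on et, and permuting colours makes that constant
  the colour of vt. After deleting an edge f \<noteq> et of G1, a colouring of G1 - f is non-constant
  on et, so the hypothesis extends its restriction to et over G2', and the two glue.\<close>

lemma verts_pair [simp]: "verts (V, E) = V"
  by (simp add: verts_def)

lemma edges_pair [simp]: "edges (V, E) = E"
  by (simp add: edges_def)

lemma hypergraph_eqI: "verts G = verts H \<Longrightarrow> edges G = edges H \<Longrightarrow> G = H"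
  by (simp add: verts_def edges_def prod_eq_iff)

definition bichromatic :: "('a \<Rightarrow> nat) \<Rightarrow> 'a set \<Rightarrow> bool" where
  "bichromatic \<phi> e \<longleftrightarrow> (\<exists>x\<in>e. \<exists>y\<in>e. \<phi> x \<noteq> \<phi> y)"

definition colorable :: "'a hypergraph \<Rightarrow> nat \<Rightarrow> bool" where
  "colorable H k \<longleftrightarrow> (\<exists>\<phi>. is_coloring H k \<phi>)"

definition delete_edge :: "'a hypergraph \<Rightarrow> 'a set \<Rightarrow> 'a hypergraph" where
  "delete_edge G e = (verts G, edges G - {e})"

lemma verts_delete_edge [simp]: "verts (delete_edge G e) = verts G"
  and edges_delete_edge [simp]: "edges (delete_edge G e) = edges G - {e}"
  by (simp_all add: delete_edge_def)

lemma is_coloring_iff: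
  "is_coloring H k \<phi> \<longleftrightarrow> \<phi> ` verts H \<subseteq> {1..k} \<and> (\<forall>e\<in>edges H. bichromatic \<phi> e)"
  by (simp add: is_coloring_def bichromatic_def)

lemma bichromatic_cong: "bichromatic \<phi> e \<Longrightarrow> (\<And>x. x \<in> e \<Longrightarrow> \<psi> x = \<phi> x) \<Longrightarrow> bichromatic \<psi> e"
  unfolding bichromatic_def by auto

lemma bichromatic_mono: "bichromatic \<phi> g \<Longrightarrow> g \<subseteq> h \<Longrightarrow> bichromatic \<phi> h"
  unfolding bichromatic_def by blast

lemma bichromatic_comp_inj: "bichromatic \<phi> e \<Longrightarrow> inj \<sigma> \<Longrightarrow> bichromatic (\<sigma> \<circ> \<phi>) e"
  unfolding bichromatic_def by (auto dest: injD)

lemma bichromatic_iff_differs: "v \<in> e \<Longrightarrow> bichromatic \<phi> e \<longleftrightarrow> (\<exists>x\<in>e. \<phi> x \<noteq> \<phi> v)"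
  unfolding bichromatic_def by metis

lemma bichromatic_replace_vertex:
  assumes "v \<in> e" and "b \<in> B"
    and agree: "\<And>x. x \<in> e - {v} \<Longrightarrow> \<psi> x = \<phi> x"
    and on_B: "\<And>x. x \<in> B \<Longrightarrow> \<psi> x = \<phi> v"
  shows "bichromatic \<psi> ((e - {v}) \<union> B) \<longleftrightarrow> bichromatic \<phi> e"
proof -
  have "bichromatic \<psi> ((e - {v}) \<union> B) \<longleftrightarrow> (\<exists>x\<in>(e - {v}) \<union> B. \<psi> x \<noteq> \<psi> b)"
    using \<open>b \<in> B\<close> by (intro bichromatic_iff_differs) simp
  also have "\<dots> \<longleftrightarrow> (\<exists>x\<in>e - {v}. \<phi> x \<noteq> \<phi> v)"
    using \<open>b \<in> B\<close> agree on_B by (metis Un_iff)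
  also have "\<dots> \<longleftrightarrow> bichromatic \<phi> e"
    using bichromatic_iff_differs[OF \<open>v \<in> e\<close>] by blast
  finally show ?thesis .
qed

lemma two_le_card_image_if_bichromatic:
  assumes "finite e" and "bichromatic \<phi> e"
  shows "2 \<le> card (\<phi> ` e)"
proof -
  obtain x y where "x \<in> e" "y \<in> e" "\<phi> x \<noteq> \<phi> y"
    using assms(2) unfolding bichromatic_def by blast
  then have "card {\<phi> x, \<phi> y} \<le> card (\<phi> ` e)"
    using assms(1) by (intro card_mono) auto
  with \<open>\<phi> x \<noteq> \<phi> y\<close> show ?thesis by simp
qed

lemma is_coloring_subhypergraph:
  "is_coloring G k \<phi> \<Longrightarrow> verts H \<subseteq> verts G \<Longrightarrow> edges H \<subseteq> edges G \<Longrightarrow> is_coloring H k \<phi>"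
  unfolding is_coloring_iff by blast

lemma is_coloring_mono: "is_coloring H n \<phi> \<Longrightarrow> n \<le> k \<Longrightarrow> is_coloring H k \<phi>"
  unfolding is_coloring_def by auto

lemma is_coloring_comp_permutation:
  assumes "is_coloring H k \<phi>" and "inj \<sigma>" and "\<sigma> ` {1..k} \<subseteq> {1..k}"
  shows "is_coloring H k (\<sigma> \<circ> \<phi>)"
  using assms unfolding is_coloring_iff by (auto intro: bichromatic_comp_inj)

lemma is_coloring_if_delete_edge:
  "is_coloring (delete_edge G e) k \<phi> \<Longrightarrow> bichromatic \<phi> e \<Longrightarrow> is_coloring G k \<phi>"
  unfolding is_coloring_iff by auto

lemma ex_other_if_two_le_card: "2 \<le> card A \<Longrightarrow> \<exists>y\<in>A. y \<noteq> x"
proof (rule ccontr)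
  assume "2 \<le> card A" "\<not> (\<exists>y\<in>A. y \<noteq> x)"
  then have "card A \<le> card {x}" by (intro card_mono) auto
  with \<open>2 \<le> card A\<close> show False by simp
qed

lemma colorable_card_verts: "hypergraph H \<Longrightarrow> colorable H (card (verts H))"
proof -
  assume H: "hypergraph H"
  then have "finite (verts H)" by (simp add: hypergraph_def)
  then obtain h where h: "bij_betw h (verts H) {0..<card (verts H)}"
    using ex_bij_betw_finite_nat by blast
  have "bichromatic (\<lambda>x. h x + 1) e" if "e \<in> edges H" for e
  proof -
    have "e \<subseteq> verts H" "2 \<le> card e" using H that by (auto simp: hypergraph_def)
    then obtain x y where "x \<in> e" "y \<in> e" "x \<noteq> y"
      by (metis ex_other_if_two_le_card)
    with h \<open>e \<subseteq> verts H\<close> show ?thesis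
      unfolding bichromatic_def bij_betw_def by (metis add_right_cancel inj_onD subsetD)
  qed
  moreover have "(\<lambda>x. h x + 1) ` verts H \<subseteq> {1..card (verts H)}"
    using bij_betw_apply[OF h] by force
  ultimately show ?thesis
    unfolding colorable_def is_coloring_iff by (metis image_subsetI)
qed

lemma chi_le_iff_colorable: "hypergraph H \<Longrightarrow> chi H \<le> k \<longleftrightarrow> colorable H k"
proof
  assume "hypergraph H" "chi H \<le> k"
  then have "\<exists>n. colorable H n"
    using colorable_card_verts by blast
  then have "colorable H (chi H)"
    unfolding chi_def colorable_def by (rule LeastI_ex)
  with \<open>chi H \<le> k\<close> show "colorable H k"
    unfolding colorable_def by (blast intro: is_coloring_mono)
next
  assume "colorable H k"
  then show "chi H \<le> k"
    unfolding chi_def colorable_def by (rule Least_le)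
qed

lemma chi_eqI:
  assumes "colorable G (Suc k)" and "\<not> colorable G k"
  shows "chi G = Suc k"
  unfolding chi_def
proof (rule Least_equality)
  show "\<exists>\<phi>. is_coloring G (Suc k) \<phi>"
    using assms(1) unfolding colorable_def .
next
  fix n assume "\<exists>\<phi>. is_coloring G n \<phi>"
  with assms(2) show "Suc k \<le> n"
    unfolding colorable_def by (meson is_coloring_mono not_less_eq_eq)
qed

text \<open>A fresh colour on one vertex of the deleted edge repairs the colouring.\<close>
lemma colorable_Suc_if_delete_edge:
  assumes G: "hypergraph G" and "e \<in> edges G" and "colorable (delete_edge G e) k"
  shows "colorable G (Suc k)"
proof -
  obtain \<phi> where \<phi>: "is_coloring (delete_edge G e) k \<phi>"
    using assms(3) unfolding colorable_def by blast
  have "2 \<le> card e"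
    using G \<open>e \<in> edges G\<close> unfolding hypergraph_def by blast
  then have "e \<noteq> {}"
    by auto
  then obtain x where "x \<in> e"
    by blast
  define \<psi> where "\<psi> = \<phi>(x := Suc k)"
  have \<phi>_range: "\<phi> y \<in> {1..k}" if "y \<in> verts G" for y
    using \<phi> that unfolding is_coloring_iff by auto
  have "bichromatic \<psi> g" if g: "g \<in> edges G" for g
  proof (cases "x \<in> g")
    case True
    have "2 \<le> card g" "g \<subseteq> verts G"
      using G g unfolding hypergraph_def by blast+
    then obtain y where y: "y \<in> g" "y \<noteq> x" "y \<in> verts G"
      using ex_other_if_two_le_card[of g x] by blast
    then have "\<psi> y \<noteq> \<psi> x"
      using \<phi>_range[of y] unfolding \<psi>_def by simp
    with True y(1) show ?thesis
      unfolding bichromatic_def by blast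
  next
    case False
    with \<open>x \<in> e\<close> g \<phi> have "bichromatic \<phi> g"
      unfolding is_coloring_iff by auto
    then show ?thesis
      by (rule bichromatic_cong) (use False in \<open>auto simp: \<psi>_def\<close>)
  qed
  moreover have "\<psi> y \<in> {1..Suc k}" if "y \<in> verts G" for y
    using \<phi>_range[OF that] by (simp add: \<psi>_def)
  ultimately show ?thesis
    unfolding colorable_def is_coloring_iff by (metis image_subsetI)
qed

lemma critical_not_colorable: "critical k G \<Longrightarrow> \<not> colorable G k"
  using chi_le_iff_colorable[of G k] unfolding critical_def by simp

lemma critical_proper_subhypergraph_colorable:
  "critical k G \<Longrightarrow> subhypergraph H G \<Longrightarrow> H \<noteq> G \<Longrightarrow> colorable H k"
  unfolding critical_def subhypergraph_def using chi_le_iff_colorable by blast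

lemma critical_delete_edge_colorable:
  assumes "critical k G" and "e \<in> edges G"
  shows "colorable (delete_edge G e) k"
proof (rule critical_proper_subhypergraph_colorable[OF assms(1)])
  show "subhypergraph (delete_edge G e) G"
    using assms(1) unfolding critical_def subhypergraph_def hypergraph_def by auto
  show "delete_edge G e \<noteq> G"
    using assms(2) by (metis Diff_iff edges_delete_edge singletonI)
qed

lemma critical_delete_edge_not_bichromatic:
  "critical k G \<Longrightarrow> is_coloring (delete_edge G e) k \<phi> \<Longrightarrow> \<not> bichromatic \<phi> e"
  using critical_not_colorable is_coloring_if_delete_edge unfolding colorable_def by blast

text \<open>Every colouring of G - e is constant on e; permuting colours makes the constant any
  prescribed colour.\<close>
lemma critical_delete_edge_coloring_with_color:
  assumes G: "critical k G" and "e \<in> edges G" and "d \<in> {1..k}"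
  obtains \<psi> where "is_coloring (delete_edge G e) k \<psi>" and "\<And>x. x \<in> e \<Longrightarrow> \<psi> x = d"
proof -
  obtain \<phi> where \<phi>: "is_coloring (delete_edge G e) k \<phi>"
    using critical_delete_edge_colorable[OF assms(1,2)] unfolding colorable_def by blast
  have "hypergraph G"
    using G unfolding critical_def by blast
  then have "2 \<le> card e" "e \<subseteq> verts G"
    using \<open>e \<in> edges G\<close> unfolding hypergraph_def by blast+
  then have "e \<noteq> {}"
    by auto
  with \<open>e \<subseteq> verts G\<close> obtain x where "x \<in> e" "x \<in> verts G"
    by blast
  define c where "c = \<phi> x"
  have "c \<in> {1..k}"
    using \<phi> \<open>x \<in> verts G\<close> unfolding is_coloring_iff c_def by auto
  have const: "\<phi> y = c" if "y \<in> e" for y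
    using critical_delete_edge_not_bichromatic[OF G \<phi>] that \<open>x \<in> e\<close>
    unfolding bichromatic_def c_def by blast
  have "is_coloring (delete_edge G e) k (transpose c d \<circ> \<phi>)"
    using \<phi> \<open>c \<in> {1..k}\<close> \<open>d \<in> {1..k}\<close>
    by (intro is_coloring_comp_permutation) (simp_all add: inj_transpose)
  moreover have "(transpose c d \<circ> \<phi>) y = d" if "y \<in> e" for y
    using const[OF that] by simp
  ultimately show thesis
    using that by blast
qed

lemma critical_no_isolated_vertex:
  assumes G: "critical k G" and "1 \<le> k" and "v \<in> verts G"
  shows "\<exists>e\<in>edges G. v \<in> e"
proof (rule ccontr)
  assume isolated: "\<not> (\<exists>e\<in>edges G. v \<in> e)"
  let ?H = "(verts G - {v}, edges G)"
  have "subhypergraph ?H G"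
    using G isolated unfolding critical_def subhypergraph_def hypergraph_def by auto
  moreover have "?H \<noteq> G"
    using \<open>v \<in> verts G\<close> by (metis Diff_iff singletonI verts_pair)
  ultimately obtain \<phi> where \<phi>: "is_coloring ?H k \<phi>"
    using critical_proper_subhypergraph_colorable[OF G] unfolding colorable_def by blast
  have "bichromatic (\<phi>(v := 1)) g" if "g \<in> edges G" for g
  proof -
    have "bichromatic \<phi> g"
      using \<phi> that unfolding is_coloring_iff by simp
    then show ?thesis
      by (rule bichromatic_cong) (use that isolated in auto)
  qed
  moreover have "\<phi>(v := 1) ` verts G \<subseteq> {1..k}"
    using \<phi> \<open>1 \<le> k\<close> unfolding is_coloring_iff by auto
  ultimately have "is_coloring G k (\<phi>(v := 1))"
    unfolding is_coloring_iff by blast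
  then show False
    using critical_not_colorable[OF G] unfolding colorable_def by blast
qed

lemma critical_edges_antichain:
  assumes G: "critical k G" and "g \<in> edges G" and "h \<in> edges G" and "g \<subseteq> h"
  shows "g = h"
proof (rule ccontr)
  assume "g \<noteq> h"
  obtain \<phi> where \<phi>: "is_coloring (delete_edge G h) k \<phi>"
    using critical_delete_edge_colorable[OF G \<open>h \<in> edges G\<close>] unfolding colorable_def by blast
  then have "bichromatic \<phi> g"
    using \<open>g \<in> edges G\<close> \<open>g \<noteq> h\<close> unfolding is_coloring_iff by auto
  then have "bichromatic \<phi> h"
    using \<open>g \<subseteq> h\<close> by (rule bichromatic_mono)
  with critical_delete_edge_not_bichromatic[OF G \<phi>] show False ..
qed

lemma criticalI:
  assumes G: "hypergraph G" and "edges G \<noteq> {}" and "\<not> colorable G k"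
    and no_isolated: "\<And>v. v \<in> verts G \<Longrightarrow> \<exists>e\<in>edges G. v \<in> e"
    and delete: "\<And>e. e \<in> edges G \<Longrightarrow> colorable (delete_edge G e) k"
  shows "critical k G"
proof -
  obtain e where "e \<in> edges G"
    using \<open>edges G \<noteq> {}\<close> by blast
  then have "chi G = Suc k"
    using G delete \<open>\<not> colorable G k\<close> by (blast intro: chi_eqI colorable_Suc_if_delete_edge)
  moreover have "chi H \<le> k" if H: "subhypergraph H G" "H \<noteq> G" for H
  proof -
    have "colorable H k"
    proof (cases "edges H = edges G")
      case True
      with H have "verts H \<noteq> verts G"
        using hypergraph_eqI by blast
      then obtain v where v: "v \<in> verts G" "v \<notin> verts H"
        using H(1) unfolding subhypergraph_def by blast
      then obtain e where "e \<in> edges H" "v \<in> e"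
        using no_isolated True by blast
      then have False
        using H(1) v(2) unfolding subhypergraph_def hypergraph_def by blast
      then show ?thesis ..
    next
      case False
      then obtain f where f: "f \<in> edges G" "f \<notin> edges H"
        using H(1) unfolding subhypergraph_def by blast
      obtain \<phi> where "is_coloring (delete_edge G f) k \<phi>"
        using delete[OF f(1)] unfolding colorable_def by blast
      then have "is_coloring H k \<phi>"
        using H(1) f(2) unfolding subhypergraph_def
        by (elim is_coloring_subhypergraph) auto
      then show ?thesis
        unfolding colorable_def by blast
    qed
    then show ?thesis
      using H(1) chi_le_iff_colorable unfolding subhypergraph_def by blast
  qed
  ultimately show ?thesis
    using G unfolding critical_def by simp
qed

locale hypergraph_splitting =
  fixes G1 :: "'a hypergraph" and et :: "'a set" and G2 :: "'a hypergraph"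
    and vt :: 'a and s :: "'a set \<Rightarrow> 'a set"
  assumes hypergraph_G1: "hypergraph G1" and hypergraph_G2: "hypergraph G2"
    and disjoint: "verts G1 \<inter> verts G2 = {}"
    and et_edge: "et \<in> edges G1" and vt_vertex: "vt \<in> verts G2"
    and admissible: "admissible et G2 vt s"
begin

abbreviation G :: "'a hypergraph" where
  "G \<equiv> split_hg G1 et G2 vt s"

definition split_edge :: "'a set \<Rightarrow> 'a set" where
  "split_edge e = (if vt \<in> e then (e - {vt}) \<union> s e else e)"

lemma verts_split: "verts G = verts G1 \<union> (verts G2 - {vt})"
  by (simp add: split_hg_def)

lemma edges_split: "edges G = (edges G1 - {et}) \<union> split_edge ` edges G2"
  unfolding split_hg_def split_edge_def incident_def by auto

lemma et_subset_verts_G1: "et \<subseteq> verts G1"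
  using hypergraph_G1 et_edge unfolding hypergraph_def by blast

lemma admissibleD:
  assumes "e \<in> edges G2" and "vt \<in> e"
  shows "s e \<noteq> {}" and "s e \<subseteq> et"
  using admissible assms unfolding admissible_def incident_def by auto

lemma et_eq_Union: "et = (\<Union>e\<in>{e\<in>edges G2. vt \<in> e}. s e)"
  using admissible unfolding admissible_def incident_def by auto

lemma split_edge_subset:
  assumes "e \<in> edges G2"
  shows "split_edge e \<subseteq> (verts G2 - {vt}) \<union> et"
  using assms admissibleD hypergraph_G2 unfolding split_edge_def hypergraph_def by auto

lemma diff_vt_subset_split_edge: "e - {vt} \<subseteq> split_edge e"
  unfolding split_edge_def by auto

lemma split_edge_meets_verts_G2:
  assumes "e \<in> edges G2"
  obtains x where "x \<in> split_edge e" and "x \<in> verts G2 - {vt}"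
proof -
  have "2 \<le> card e" "e \<subseteq> verts G2"
    using hypergraph_G2 assms unfolding hypergraph_def by blast+
  then obtain x where "x \<in> e" "x \<noteq> vt"
    using ex_other_if_two_le_card[of e vt] by blast
  with \<open>e \<subseteq> verts G2\<close> diff_vt_subset_split_edge show thesis
    using that by blast
qed

lemma hypergraph_split: "hypergraph G"
proof -
  have fin: "finite (verts G)"
    using hypergraph_G1 hypergraph_G2 unfolding verts_split hypergraph_def by blast
  have "g \<subseteq> verts G \<and> 2 \<le> card g" if "g \<in> edges G" for g
  proof (cases "g \<in> edges G1 - {et}")
    case True
    with hypergraph_G1 show ?thesis
      unfolding verts_split hypergraph_def by blast
  next
    case False
    with that obtain e where e: "e \<in> edges G2" "g = split_edge e"
      unfolding edges_split by blast
    then have sub: "g \<subseteq> verts G"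
      using split_edge_subset et_subset_verts_G1 unfolding verts_split by blast
    show ?thesis
    proof (cases "vt \<in> e")
      case True
      obtain x where x: "x \<in> g" "x \<in> verts G2 - {vt}"
        using split_edge_meets_verts_G2 e by metis
      obtain y where "y \<in> s e"
        using admissibleD(1)[OF e(1) True] by blast
      then have y: "y \<in> g" "y \<in> verts G1"
        using e(2) True admissibleD(2)[OF e(1) True] et_subset_verts_G1 unfolding split_edge_def by auto
      have "x \<noteq> y"
        using x(2) y(2) disjoint by blast
      then have "card {x, y} \<le> card g"
        using x(1) y(1) sub fin by (intro card_mono) (auto intro: finite_subset)
      with sub \<open>x \<noteq> y\<close> show ?thesis
        by simp
    next
      case False
      with e hypergraph_G2 sub show ?thesis
        unfolding split_edge_def hypergraph_def by auto
    qed
  qed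
  with fin show ?thesis
    unfolding hypergraph_def by blast
qed

lemma split_edge_in_edges: "e \<in> edges G2 \<Longrightarrow> split_edge e \<in> edges G"
  unfolding edges_split by blast

lemma split_no_isolated_vertex:
  assumes "\<And>v. v \<in> verts G1 \<Longrightarrow> \<exists>e\<in>edges G1. v \<in> e"
    and "\<And>v. v \<in> verts G2 \<Longrightarrow> \<exists>e\<in>edges G2. v \<in> e"
    and "v \<in> verts G"
  shows "\<exists>g\<in>edges G. v \<in> g"
proof (cases "v \<in> verts G1")
  case True
  then obtain g where g: "g \<in> edges G1" "v \<in> g"
    using assms(1) by blast
  show ?thesis
  proof (cases "g = et")
    case True
    with g(2) have "v \<in> (\<Union>e\<in>{e\<in>edges G2. vt \<in> e}. s e)"
      using et_eq_Union by simp
    then obtain e where "e \<in> edges G2" "vt \<in> e" "v \<in> s e"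
      by blast
    then have "v \<in> split_edge e"
      unfolding split_edge_def by simp
    with split_edge_in_edges[OF \<open>e \<in> edges G2\<close>] show ?thesis
      by blast
  next
    case False
    with g show ?thesis
      unfolding edges_split by blast
  qed
next
  case False
  with assms(3) have "v \<in> verts G2 - {vt}"
    unfolding verts_split by blast
  then obtain e where "e \<in> edges G2" "v \<in> e"
    using assms(2) by blast
  with \<open>v \<in> verts G2 - {vt}\<close> have "v \<in> split_edge e"
    using diff_vt_subset_split_edge by blast
  with split_edge_in_edges[OF \<open>e \<in> edges G2\<close>] show ?thesis
    by blast
qed

lemma split_not_colorable:
  assumes "\<not> colorable G1 k" and "\<not> colorable G2 k"
  shows "\<not> colorable G k"
proof
  assume "colorable G k"
  then obtain \<phi> where \<phi>: "is_coloring G k \<phi>"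
    unfolding colorable_def by blast
  have range: "\<phi> ` (verts G1 \<union> (verts G2 - {vt})) \<subseteq> {1..k}"
    using \<phi> unfolding is_coloring_iff verts_split by blast
  show False
  proof (cases "bichromatic \<phi> et")
    case True
    then have "is_coloring G1 k \<phi>"
      using \<phi> range unfolding is_coloring_iff edges_split by auto
    with assms(1) show False
      unfolding colorable_def by blast
  next
    case False
    have "2 \<le> card et"
      using hypergraph_G1 et_edge unfolding hypergraph_def by blast
    then have "et \<noteq> {}"
      by auto
    then obtain x where "x \<in> et"
      by blast
    define c where "c = \<phi> x"
    have const: "\<phi> y = c" if "y \<in> et" for y
      using False that \<open>x \<in> et\<close> unfolding bichromatic_def c_def by blast
    have "bichromatic (\<phi>(vt := c)) e" if e: "e \<in> edges G2" for e
    proof (cases "vt \<in> e")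
      case True
      obtain b where "b \<in> s e"
        using admissibleD(1)[OF e True] by blast
      moreover have "bichromatic \<phi> ((e - {vt}) \<union> s e)"
        using \<phi> e True unfolding is_coloring_iff edges_split split_edge_def by force
      ultimately show ?thesis
        using True const admissibleD(2)[OF e True]
        by (subst bichromatic_replace_vertex[symmetric, where \<psi> = \<phi>]) auto
    next
      case False
      then have "bichromatic \<phi> e"
        using \<phi> e unfolding is_coloring_iff edges_split split_edge_def by force
      then show ?thesis
        by (rule bichromatic_cong) (use False in auto)
    qed
    moreover have "c \<in> {1..k}"
      using range \<open>x \<in> et\<close> et_subset_verts_G1 unfolding c_def by blast
    then have "\<phi>(vt := c) ` verts G2 \<subseteq> {1..k}"
      using range by auto
    ultimately have "is_coloring G2 k (\<phi>(vt := c))"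
      unfolding is_coloring_iff by blast
    with assms(2) show False
      unfolding colorable_def by blast
  qed
qed

definition glue :: "('a \<Rightarrow> nat) \<Rightarrow> ('a \<Rightarrow> nat) \<Rightarrow> 'a \<Rightarrow> nat" where
  "glue \<phi>1 \<phi>2 x = (if x \<in> verts G1 then \<phi>1 x else \<phi>2 x)"

lemma glue_range:
  assumes "\<phi>1 ` verts G1 \<subseteq> {1..k}" and "\<phi>2 ` (verts G2 - {vt}) \<subseteq> {1..k}"
  shows "glue \<phi>1 \<phi>2 ` verts G \<subseteq> {1..k}"
  using assms unfolding glue_def verts_split by auto

lemma glue_eq_right: "x \<in> verts G2 \<Longrightarrow> glue \<phi>1 \<phi>2 x = \<phi>2 x"
  using disjoint unfolding glue_def by auto

lemma bichromatic_glue_left: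
  assumes "g \<in> edges G1" and "bichromatic \<phi>1 g"
  shows "bichromatic (glue \<phi>1 \<phi>2) g"
proof -
  have "g \<subseteq> verts G1"
    using hypergraph_G1 assms(1) unfolding hypergraph_def by blast
  with assms(2) show ?thesis
    by (elim bichromatic_cong) (auto simp: glue_def)
qed

text \<open>Colour G1 - et with the constant colour of vt on et; then every split edge sees, in
  place of vt, only vertices of that colour.\<close>
lemma is_coloring_glue_delete_split_edge:
  assumes \<phi>1: "is_coloring (delete_edge G1 et) k \<phi>1"
    and on_et: "\<And>x. x \<in> et \<Longrightarrow> \<phi>1 x = \<phi>2 vt"
    and \<phi>2: "is_coloring (delete_edge G2 f) k \<phi>2"
  shows "is_coloring (delete_edge G (split_edge f)) k (glue \<phi>1 \<phi>2)"
proof -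
  have "bichromatic (glue \<phi>1 \<phi>2) g" if g: "g \<in> edges G" "g \<noteq> split_edge f" for g
  proof (cases "g \<in> edges G1 - {et}")
    case True
    with \<phi>1 show ?thesis
      unfolding is_coloring_iff by (auto intro: bichromatic_glue_left)
  next
    case False
    with g obtain e where e: "e \<in> edges G2" "g = split_edge e"
      unfolding edges_split by blast
    with g(2) \<phi>2 have bi: "bichromatic \<phi>2 e"
      unfolding is_coloring_iff by auto
    have "e \<subseteq> verts G2"
      using e(1) hypergraph_G2 unfolding hypergraph_def by blast
    then have agree: "glue \<phi>1 \<phi>2 x = \<phi>2 x" if "x \<in> e - {vt}" for x
      using that by (intro glue_eq_right) blast
    show ?thesis
    proof (cases "vt \<in> e")
      case True
      obtain b where b: "b \<in> s e"
        using admissibleD(1)[OF e(1) True] by blast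
      have on_s: "glue \<phi>1 \<phi>2 x = \<phi>2 vt" if "x \<in> s e" for x
        using that admissibleD(2)[OF e(1) True] et_subset_verts_G1 on_et unfolding glue_def by auto
      have "bichromatic (glue \<phi>1 \<phi>2) ((e - {vt}) \<union> s e)"
        using bichromatic_replace_vertex[where \<psi> = "glue \<phi>1 \<phi>2" and \<phi> = \<phi>2, OF True b agree on_s] bi by simp
      with e(2) True show ?thesis
        unfolding split_edge_def by simp
    next
      case False
      from bi have "bichromatic (glue \<phi>1 \<phi>2) e"
        by (rule bichromatic_cong) (use False in \<open>auto intro: agree\<close>)
      with e(2) False show ?thesis
        unfolding split_edge_def by simp
    qed
  qed
  moreover have "glue \<phi>1 \<phi>2 ` verts G \<subseteq> {1..k}"
    using \<phi>1 \<phi>2 unfolding is_coloring_iff by (intro glue_range) auto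
  ultimately show ?thesis
    unfolding is_coloring_iff by simp
qed

lemma delete_split_edge_colorable:
  assumes "critical k G1" and "critical k G2" and "f \<in> edges G2"
  shows "colorable (delete_edge G (split_edge f)) k"
proof -
  obtain \<phi>2 where \<phi>2: "is_coloring (delete_edge G2 f) k \<phi>2"
    using critical_delete_edge_colorable[OF assms(2,3)] unfolding colorable_def by blast
  then have "\<phi>2 vt \<in> {1..k}"
    using vt_vertex unfolding is_coloring_iff by auto
  then obtain \<phi>1 where "is_coloring (delete_edge G1 et) k \<phi>1" "\<And>x. x \<in> et \<Longrightarrow> \<phi>1 x = \<phi>2 vt"
    using critical_delete_edge_coloring_with_color[OF assms(1) et_edge] by blast
  with \<phi>2 show ?thesis
    unfolding colorable_def by (blast intro: is_coloring_glue_delete_split_edge)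
qed

lemma edges_induced_et_empty:
  assumes "critical k G1"
  shows "edges (induced G et) = {}"
proof -
  have "\<not> g \<subseteq> et" if "g \<in> edges G" for g
  proof (cases "g \<in> edges G1 - {et}")
    case True
    then show ?thesis
      using critical_edges_antichain[OF assms _ et_edge] by blast
  next
    case False
    with that obtain e where "e \<in> edges G2" "g = split_edge e"
      unfolding edges_split by blast
    then obtain x where "x \<in> g" "x \<in> verts G2 - {vt}"
      using split_edge_meets_verts_G2 by metis
    then show ?thesis
      using et_subset_verts_G1 disjoint by blast
  qed
  then show ?thesis
    unfolding induced_def by auto
qed

lemma delete_G1_edge_colorable:
  assumes "critical k G1" and "f \<in> edges G1" and "f \<noteq> et"
    and extend: "\<And>\<phi>. is_coloring (induced G et) k \<phi> \<Longrightarrow> 2 \<le> card (\<phi> ` et) \<Longrightarrow>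
      \<exists>\<phi>'. is_coloring (induced G ((verts G2 - {vt}) \<union> et)) k \<phi>' \<and> (\<forall>x\<in>et. \<phi>' x = \<phi> x)"
  shows "colorable (delete_edge G f) k"
proof -
  obtain \<phi>1 where \<phi>1: "is_coloring (delete_edge G1 f) k \<phi>1"
    using critical_delete_edge_colorable[OF assms(1,2)] unfolding colorable_def by blast
  have "bichromatic \<phi>1 et"
    using \<phi>1 et_edge \<open>f \<noteq> et\<close> unfolding is_coloring_iff by auto
  moreover have "finite et"
    using et_subset_verts_G1 hypergraph_G1 finite_subset unfolding hypergraph_def by blast
  moreover have "is_coloring (induced G et) k \<phi>1"
    using \<phi>1 et_subset_verts_G1 edges_induced_et_empty[OF assms(1)]
    unfolding is_coloring_iff by (auto simp: induced_def)
  ultimately obtain \<phi>' where \<phi>': "is_coloring (induced G ((verts G2 - {vt}) \<union> et)) k \<phi>'"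
    and agree: "\<forall>x\<in>et. \<phi>' x = \<phi>1 x"
    using extend two_le_card_image_if_bichromatic by blast
  have "bichromatic (glue \<phi>1 \<phi>') g" if g: "g \<in> edges G" "g \<noteq> f" for g
  proof (cases "g \<in> edges G1 - {et}")
    case True
    with \<phi>1 g(2) show ?thesis
      unfolding is_coloring_iff by (auto intro: bichromatic_glue_left)
  next
    case False
    with g obtain e where "e \<in> edges G2" "g = split_edge e"
      unfolding edges_split by blast
    then have sub: "g \<subseteq> (verts G2 - {vt}) \<union> et"
      using split_edge_subset by blast
    with \<phi>' g(1) have "bichromatic \<phi>' g"
      unfolding is_coloring_iff by (auto simp: induced_def)
    moreover have "glue \<phi>1 \<phi>' x = \<phi>' x" if "x \<in> g" for x
      using that sub agree et_subset_verts_G1 disjoint unfolding glue_def by auto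
    ultimately show ?thesis
      by (rule bichromatic_cong)
  qed
  moreover have "glue \<phi>1 \<phi>' ` verts G \<subseteq> {1..k}"
    using \<phi>1 \<phi>' unfolding is_coloring_iff by (intro glue_range) (auto simp: induced_def)
  ultimately show ?thesis
    unfolding colorable_def is_coloring_iff by auto
qed

end

theorem theorem17:
  fixes G1 G2 :: "'a hypergraph" and k :: nat and et :: "'a set" and vt :: 'a
    and s :: "'a set \<Rightarrow> 'a set"
  assumes "k \<ge> 2"
    and "critical k G1" and "critical k G2"
    and "verts G1 \<inter> verts G2 = {}"
    and "et \<in> edges G1" and "vt \<in> verts G2"
    and "admissible et G2 vt s"
    and "\<forall>\<phi>. is_coloring (induced (split_hg G1 et G2 vt s) et) k \<phi> \<and> card (\<phi> ` et) \<ge> 2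
           \<longrightarrow> (\<exists>\<phi>'. is_coloring (induced (split_hg G1 et G2 vt s) ((verts G2 - {vt}) \<union> et)) k \<phi>'
                    \<and> (\<forall>x\<in>et. \<phi>' x = \<phi> x))"
  shows "critical k (split_hg G1 et G2 vt s)"
proof -
  interpret hypergraph_splitting G1 et G2 vt s
    using assms(2-7) by unfold_locales (auto simp: critical_def)
  have "1 \<le> k"
    using \<open>k \<ge> 2\<close> by simp
  note no_isolated = critical_no_isolated_vertex[OF _ \<open>1 \<le> k\<close>]
  show ?thesis
  proof (rule criticalI)
    show "hypergraph G"
      by (rule hypergraph_split)
    show "edges G \<noteq> {}"
      using no_isolated[OF assms(3) vt_vertex] split_edge_in_edges by blast
    show "\<not> colorable G k"
      using split_not_colorable critical_not_colorable assms(2,3) by blast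
    show "\<exists>g\<in>edges G. v \<in> g" if "v \<in> verts G" for v
      by (rule split_no_isolated_vertex[OF no_isolated[OF assms(2)] no_isolated[OF assms(3)] that])
    show "colorable (delete_edge G f) k" if "f \<in> edges G" for f
      using that unfolding edges_split
    proof (elim UnE DiffE imageE)
      assume "f \<in> edges G1" "f \<notin> {et}"
      then show ?thesis
        using assms(8) by (intro delete_G1_edge_colorable[OF assms(2)]) auto
    next
      fix e assume "f = split_edge e" "e \<in> edges G2"
      then show ?thesis
        using delete_split_edge_colorable[OF assms(2,3)] by blast
    qed
  qed
qed

end
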